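(* Let $N=2^n$ and $L=\{f:\{0,1\}^n\to\{0,1\}\ :\ \exists s\in\{0,1\}^n\setminus\{0^n\}\ \forall x\ f(x)=f(x\oplus s)\}$. Every classical probabilistic property tester for $L$ with distance parameter $1/8$ (even with two-sided error) makes $\Omega(\sqrt N)$ queries.
   Context: Functions $f:\{0,1\}^n\to\{0,1\}$ are identified with strings of length $N=2^n$. $f$ is $\epsilon$-far from $L$ if it differs from every $g\in L$ in more than $\epsilon N$ points. A classical property tester with distance parameter $\epsilon$ is a probabilistic (possibly adaptive) algorithm querying values $f(x)$ that accepts every $f\in L$ with probability $\ge2/3$ and every $\epsilon$-far $f$ with probability $\le1/3$; complexity is the number of queries. *)

theory Defs
  imports "HOL-Probability.Probability"
begin

text \<open>Points of {0,1}^n are encoded as natural numbers x < 2^n (binary expansion);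
  bitwise XOR is the library operation xor on nat. A Boolean function on {0,1}^n is a
  function nat => bool, of which only the values on {..<2^n} matter.\<close>

definition in_L :: "nat \<Rightarrow> (nat \<Rightarrow> bool) \<Rightarrow> bool" where
  "in_L n f \<longleftrightarrow> (\<exists>s. 0 < s \<and> s < 2 ^ n \<and> (\<forall>x < 2 ^ n. f x = f (xor x s)))"

definition dist_fun :: "nat \<Rightarrow> (nat \<Rightarrow> bool) \<Rightarrow> (nat \<Rightarrow> bool) \<Rightarrow> nat" where
  "dist_fun n f g = card {x. x < 2 ^ n \<and> f x \<noteq> g x}"

definition far_from_L :: "nat \<Rightarrow> real \<Rightarrow> (nat \<Rightarrow> bool) \<Rightarrow> bool" where
  "far_from_L n eps f \<longleftrightarrow> (\<forall>g. in_L n g \<longrightarrow> real (dist_fun n f g) > eps * 2 ^ n)"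

text \<open>A deterministic adaptive query algorithm: given the answers received so far
  (a bool list) it chooses the next query point (taken modulo 2^n so that it lies
  in the domain), and after all queries it outputs accept/reject from the answers.\<close>
type_synonym det_alg = "(bool list \<Rightarrow> nat) \<times> (bool list \<Rightarrow> bool)"

fun answers :: "nat \<Rightarrow> det_alg \<Rightarrow> (nat \<Rightarrow> bool) \<Rightarrow> nat \<Rightarrow> bool list" where
  "answers n D f 0 = []"
| "answers n D f (Suc k) =
     (let h = answers n D f k in h @ [f (fst D h mod 2 ^ n)])"

definition accepts :: "nat \<Rightarrow> nat \<Rightarrow> det_alg \<Rightarrow> (nat \<Rightarrow> bool) \<Rightarrow> bool" where
  "accepts n q D f \<longleftrightarrow> snd D (answers n D f q)"

text \<open>A probabilistic (adaptive) algorithm making q queries is a probability distribution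
  over deterministic adaptive q-query algorithms.\<close>
definition is_tester :: "nat \<Rightarrow> real \<Rightarrow> nat \<Rightarrow> det_alg pmf \<Rightarrow> bool" where
  "is_tester n eps q A \<longleftrightarrow>
     (\<forall>f. in_L n f \<longrightarrow> measure_pmf.prob A {D. accepts n q D f} \<ge> 2/3) \<and>
     (\<forall>f. far_from_L n eps f \<longrightarrow> measure_pmf.prob A {D. accepts n q D f} \<le> 1/3)"

end

theory Submission
  imports Defs
begin

text \<open>Yao's principle, with two distributions that a few queries cannot tell apart. A uniformly
  random Boolean function h on N = 2^n points is 1/8-far from L except with probability below 1/6
  (for each shift s, few h are close to s-invariant, by a binomial tail estimate). For a uniformly
  random shift s \<noteq> 0, the function x \<mapsto> h (min x (x \<oplus> s)) lies in L. A deterministic algorithm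
  sees identically distributed answers from both functions until two of its queries differ by s,
  and along a transcript of length t at most t shifts are hit by the next query. Summing over the
  N - 1 shifts, the acceptance probabilities of a q-query algorithm on the two distributions differ
  by at most q^2/(N - 1), while a tester must separate them by 2/3 - (1/3 + 1/6). Hence
  q^2 \<ge> (N - 1)/6.\<close>

section \<open>Counting Boolean functions\<close>

text \<open>The Boolean functions on {..<N} are represented by the functions vanishing from N on,
  so that averages over all of them are finite sums.\<close>

definition bool_funs :: "nat \<Rightarrow> (nat \<Rightarrow> bool) set" where
  "bool_funs N = {h. \<forall>x. N \<le> x \<longrightarrow> \<not> h x}"

lemma card_bool_funs_fixing:
  assumes "X \<subseteq> {..<N}"
  shows "card {h \<in> bool_funs N. \<forall>x\<in>X. h x = c x} = 2 ^ (N - card X)"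
proof -
  have "bij_betw (\<lambda>h. {x. x < N \<and> x \<notin> X \<and> h x})
      {h \<in> bool_funs N. \<forall>x\<in>X. h x = c x} (Pow ({..<N} - X))"
  proof (rule bij_betwI[where g = "\<lambda>B x. x \<in> B \<or> (x \<in> X \<and> c x)"])
    show "(\<lambda>h. {x. x < N \<and> x \<notin> X \<and> h x})
        \<in> {h \<in> bool_funs N. \<forall>x\<in>X. h x = c x} \<rightarrow> Pow ({..<N} - X)"
      by auto
    show "(\<lambda>B x. x \<in> B \<or> x \<in> X \<and> c x)
        \<in> Pow ({..<N} - X) \<rightarrow> {h \<in> bool_funs N. \<forall>x\<in>X. h x = c x}"
      using assms by (auto simp: bool_funs_def)
    show "(\<lambda>x. x \<in> {x. x < N \<and> x \<notin> X \<and> h x} \<or> x \<in> X \<and> c x) = h"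
      if "h \<in> {h \<in> bool_funs N. \<forall>x\<in>X. h x = c x}" for h
      using that by (auto simp: bool_funs_def fun_eq_iff) (metis not_le)+
    show "{x. x < N \<and> x \<notin> X \<and> (x \<in> B \<or> x \<in> X \<and> c x)} = B"
      if "B \<in> Pow ({..<N} - X)" for B
      using that by auto
  qed
  then have "card {h \<in> bool_funs N. \<forall>x\<in>X. h x = c x} = card (Pow ({..<N} - X))"
    by (rule bij_betw_same_card)
  also have "\<dots> = 2 ^ (N - card X)"
    using assms by (simp add: card_Pow card_Diff_subset finite_subset)
  finally show ?thesis .
qed

lemma card_bool_funs: "card (bool_funs N) = 2 ^ N"
  using card_bool_funs_fixing[of "{}" N] by simp

lemma finite_bool_funs [simp]: "finite (bool_funs N)"
  using card_bool_funs[of N] by (metis card.infinite power_not_zero zero_neq_numeral)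

lemma card_bool_funs_prescribed:
  assumes "\<forall>i<t. y i < N"
  shows "card {h \<in> bool_funs N. \<forall>i<t. h (y i) = b ! i} =
    (if \<forall>i<t. \<forall>j<t. y i = y j \<longrightarrow> b ! i = b ! j then 2 ^ (N - card (y ` {..<t})) else 0)"
proof (cases "\<forall>i<t. \<forall>j<t. y i = y j \<longrightarrow> b ! i = b ! j")
  case True
  define c where "c v \<longleftrightarrow> (\<exists>i<t. y i = v \<and> b ! i)" for v
  have "c (y i) \<longleftrightarrow> b ! i" if "i < t" for i
    using True that unfolding c_def by blast
  then have "{h \<in> bool_funs N. \<forall>i<t. h (y i) = b ! i} = {h \<in> bool_funs N. \<forall>x\<in>y ` {..<t}. h x = c x}"
    by auto
  also have "card \<dots> = 2 ^ (N - card (y ` {..<t}))"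
    using assms by (intro card_bool_funs_fixing) auto
  finally show ?thesis
    by (subst if_P[OF True])
next
  case False
  then obtain i j where "i < t" "j < t" "y i = y j" "b ! i \<noteq> b ! j"
    by blast
  then have "\<not> (\<forall>k<t. h (y k) = b ! k)" for h
    by metis
  then have "{h \<in> bool_funs N. \<forall>i<t. h (y i) = b ! i} = {}"
    by blast
  then show ?thesis
    by (subst if_not_P[OF False]) (simp only: card.empty)
qed

lemma card_bool_funs_prescribed_relabel:
  assumes "\<forall>i<t. y i < N" "\<forall>i<t. \<sigma> (y i) < N" "inj_on \<sigma> (y ` {..<t})"
  shows "card {h \<in> bool_funs N. \<forall>i<t. h (\<sigma> (y i)) = b ! i}
       = card {h \<in> bool_funs N. \<forall>i<t. h (y i) = b ! i}"
proof -
  have same_card: "card ((\<lambda>i. \<sigma> (y i)) ` {..<t}) = card (y ` {..<t})"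
    using assms(3) by (simp add: card_image flip: image_image)
  have "\<sigma> (y i) = \<sigma> (y j) \<longleftrightarrow> y i = y j" if "i < t" "j < t" for i j
    using assms(3) that by (auto dest: inj_onD)
  then have same_consistency: "(\<forall>i<t. \<forall>j<t. \<sigma> (y i) = \<sigma> (y j) \<longrightarrow> b ! i = b ! j) \<longleftrightarrow>
      (\<forall>i<t. \<forall>j<t. y i = y j \<longrightarrow> b ! i = b ! j)"
    by blast
  show ?thesis
    unfolding card_bool_funs_prescribed[OF assms(1)] card_bool_funs_prescribed[OF assms(2)]
    by (simp only: same_card same_consistency)
qed

section \<open>Transcripts of adaptive algorithms\<close>

abbreviation query :: "nat \<Rightarrow> det_alg \<Rightarrow> bool list \<Rightarrow> nat" where
  "query n D b \<equiv> fst D b mod 2 ^ n"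

definition queries :: "nat \<Rightarrow> det_alg \<Rightarrow> bool list \<Rightarrow> nat set" where
  "queries n D b = (\<lambda>i. query n D (take i b)) ` {..<length b}"

lemma length_answers [simp]: "length (answers n D f k) = k"
  by (induction k) (auto simp: Let_def)

lemma answers_eq_iff:
  "answers n D f k = b \<longleftrightarrow> length b = k \<and> (\<forall>i<k. f (query n D (take i b)) = b ! i)"
proof (induction k arbitrary: b)
  case (Suc k)
  show ?case
  proof (cases "length b = Suc k")
    case True
    define b' where "b' = take k b"
    have b: "b = b' @ [b ! k]"
      using True unfolding b'_def by (simp add: take_Suc_conv_app_nth[symmetric])
    have "answers n D f (Suc k) = b \<longleftrightarrow> answers n D f k = b' \<and> f (query n D b') = b ! k"
      by (subst b) (auto simp: Let_def)
    also have "\<dots> \<longleftrightarrow> (\<forall>i<Suc k. f (query n D (take i b)) = b ! i)"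
      using True Suc.IH[of b'] by (auto simp: b'_def less_Suc_eq)
    finally show ?thesis
      using True by simp
  qed (metis length_answers)
qed auto

lemma card_answers_relabel:
  assumes "length b = t" "\<forall>x<2 ^ n. \<sigma> x < 2 ^ n" "inj_on \<sigma> (queries n D b)"
  shows "card {h \<in> bool_funs (2 ^ n). answers n D (h \<circ> \<sigma>) t = b}
       = card {h \<in> bool_funs (2 ^ n). answers n D h t = b}"
proof -
  have "queries n D b = (\<lambda>i. query n D (take i b)) ` {..<t}"
    using assms(1) by (simp add: queries_def)
  then show ?thesis
    using assms by (simp add: answers_eq_iff) (intro card_bool_funs_prescribed_relabel; simp)
qed

lemma card_bool_funs_by_transcript:
  fixes G :: "(nat \<Rightarrow> bool) \<Rightarrow> bool list"
  assumes "\<And>h. length (G h) = t"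
  shows "card {h \<in> bool_funs N. P (G h)} = (\<Sum>b | length b = t \<and> P b. card {h \<in> bool_funs N. G h = b})"
proof -
  have "finite {b::bool list. length b = t \<and> P b}"
    by (rule finite_subset[OF _ finite_lists_length_eq[of "UNIV::bool set" t]]) auto
  moreover have "{h \<in> bool_funs N. P (G h)} = (\<Union>b\<in>{b. length b = t \<and> P b}. {h \<in> bool_funs N. G h = b})"
    using assms by auto
  ultimately show ?thesis
    by (simp only:) (rule card_UN_disjoint; auto)
qed

lemma card_answers_relabel_pred:
  assumes "\<forall>x<2 ^ n. \<sigma> x < 2 ^ n"
    and "\<And>b. length b = t \<Longrightarrow> P b \<Longrightarrow> inj_on \<sigma> (queries n D b)"
  shows "card {h \<in> bool_funs (2 ^ n). P (answers n D (h \<circ> \<sigma>) t)}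
       = card {h \<in> bool_funs (2 ^ n). P (answers n D h t)}"
proof -
  have "card {h \<in> bool_funs (2 ^ n). P (answers n D (h \<circ> \<sigma>) t)}
      = (\<Sum>b | length b = t \<and> P b. card {h \<in> bool_funs (2 ^ n). answers n D (h \<circ> \<sigma>) t = b})"
    by (rule card_bool_funs_by_transcript) simp
  also have "\<dots> = (\<Sum>b | length b = t \<and> P b. card {h \<in> bool_funs (2 ^ n). answers n D h t = b})"
    using assms by (intro sum.cong refl card_answers_relabel) auto
  also have "\<dots> = card {h \<in> bool_funs (2 ^ n). P (answers n D h t)}"
    by (rule card_bool_funs_by_transcript[symmetric]) simp
  finally show ?thesis .
qed

section \<open>Collisions modulo a shift\<close>

definition xor_collision :: "nat \<Rightarrow> det_alg \<Rightarrow> nat \<Rightarrow> bool list \<Rightarrow> bool" where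
  "xor_collision n D s b \<longleftrightarrow> (\<exists>x\<in>queries n D b. \<exists>y\<in>queries n D b. xor x y = s)"

definition new_xor_collision :: "nat \<Rightarrow> det_alg \<Rightarrow> nat \<Rightarrow> bool list \<Rightarrow> bool" where
  "new_xor_collision n D s b \<longleftrightarrow> (\<exists>y\<in>queries n D b. xor (query n D b) y = s)"

lemma queries_snoc: "queries n D (b @ [a]) = insert (query n D b) (queries n D b)"
  by (auto simp: queries_def lessThan_Suc image_iff)

lemma xor_collision_snoc:
  assumes "s \<noteq> 0"
  shows "xor_collision n D s (b @ [a]) \<longleftrightarrow> xor_collision n D s b \<or> new_xor_collision n D s b"
  using assms by (auto simp: xor_collision_def new_xor_collision_def queries_snoc xor.commute)

lemma first_xor_collision:
  assumes "s \<noteq> 0" "xor_collision n D s (answers n D f q)"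
  shows "\<exists>t<q. \<not> xor_collision n D s (answers n D f t) \<and> new_xor_collision n D s (answers n D f t)"
  using assms(2)
proof (induction q)
  case 0
  then show ?case
    by (simp add: xor_collision_def queries_def)
next
  case (Suc q)
  then show ?case
    using xor_collision_snoc[OF assms(1)] by (simp add: Let_def) (metis less_Suc_eq)
qed

lemma card_new_xor_collision: "card {s \<in> S. new_xor_collision n D s b} \<le> length b"
proof -
  have "card {s \<in> S. new_xor_collision n D s b} \<le> card ((\<lambda>y. xor (query n D b) y) ` queries n D b)"
    by (rule card_mono) (auto simp: new_xor_collision_def queries_def)
  also have "\<dots> \<le> card (queries n D b)"
    by (rule card_image_le) (simp add: queries_def)
  also have "\<dots> \<le> length b"
    unfolding queries_def using card_image_le[of "{..<length b}"] by simp
  finally show ?thesis .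
qed

lemma sum_card_new_xor_collision:
  assumes "finite S" "finite F"
  shows "(\<Sum>s\<in>S. card {h \<in> F. new_xor_collision n D s (answers n D h t)}) \<le> card F * t"
proof -
  have "(\<Sum>s\<in>S. card {h \<in> F. new_xor_collision n D s (answers n D h t)})
      = (\<Sum>h\<in>F. card {s \<in> S. new_xor_collision n D s (answers n D h t)})"
    using assms by (intro sum_multicount_gen) auto
  also have "\<dots> \<le> (\<Sum>h\<in>F. t)"
    using card_new_xor_collision[of S n D] by (intro sum_mono) (metis length_answers)
  finally show ?thesis
    by simp
qed

section \<open>Functions invariant under a shift\<close>

lemma xor_less_two_power: "(x::nat) < 2 ^ n \<Longrightarrow> s < 2 ^ n \<Longrightarrow> xor x s < 2 ^ n"
  by (metis take_bit_nat_eq_self_iff take_bit_xor)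

lemma xor_xor_cancel_right [simp]: "xor (xor x s) s = (x::nat)"
  by (simp add: xor.assoc)

lemma xor_cancel_left [simp]: "xor x (xor x s) = (s::nat)"
  by (simp flip: xor.assoc)

lemma xor_ne_self: "s \<noteq> 0 \<Longrightarrow> xor x s \<noteq> (x::nat)"
  by (metis xor_cancel_left xor_self_eq)

text \<open>Composing with a choice of representative of each pair {x, x \<oplus> s} makes any
  function s-invariant.\<close>

definition xor_rep :: "nat \<Rightarrow> nat \<Rightarrow> nat" where
  "xor_rep s x = min x (xor x s)"

lemma xor_rep_xor: "xor_rep s (xor x s) = xor_rep s x"
  by (simp add: xor_rep_def min.commute)

lemma xor_rep_less: "x < N \<Longrightarrow> xor_rep s x < N"
  by (simp add: xor_rep_def)

lemma comp_xor_rep_in_L: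
  assumes "0 < s" "s < 2 ^ n"
  shows "in_L n (h \<circ> xor_rep s)"
  unfolding in_L_def using assms by (auto simp: xor_rep_xor)

lemma xor_rep_eq_imp:
  assumes "xor_rep s x = xor_rep s y"
  shows "x = y \<or> xor x y = s"
proof -
  have "xor_rep s x \<in> {x, xor x s}" "xor_rep s y \<in> {y, xor y s}"
    by (simp_all add: xor_rep_def min_def)
  then consider "x = y" | "x = xor y s" | "xor x s = y" | "xor x s = xor y s"
    using assms by auto
  then show ?thesis
  proof cases
    case 4
    then have "xor (xor x s) s = xor (xor y s) s"
      by (rule arg_cong)
    then show ?thesis
      by simp
  qed (auto simp: xor.assoc xor.commute xor.left_commute)
qed

lemma inj_on_xor_rep:
  assumes "\<And>x y. x \<in> X \<Longrightarrow> y \<in> X \<Longrightarrow> xor x y \<noteq> s"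
  shows "inj_on (xor_rep s) X"
  using assms xor_rep_eq_imp by (meson inj_onI)

text \<open>Until the first collision modulo s, the transcripts of h \<circ> xor_rep s and of h are
  equidistributed.\<close>

lemma card_accepting_comp_xor_rep_le:
  assumes "s \<noteq> 0"
  shows "card {h \<in> bool_funs (2 ^ n). snd D (answers n D (h \<circ> xor_rep s) q)}
    \<le> card {h \<in> bool_funs (2 ^ n). snd D (answers n D h q)}
      + (\<Sum>t<q. card {h \<in> bool_funs (2 ^ n). new_xor_collision n D s (answers n D h t)})"
proof -
  let ?F = "bool_funs (2 ^ n)"
  define acc where "acc b \<longleftrightarrow> snd D b \<and> \<not> xor_collision n D s b" for b
  define new where "new b \<longleftrightarrow> \<not> xor_collision n D s b \<and> new_xor_collision n D s b" for b
  have relabel: "card {h \<in> ?F. P (answers n D (h \<circ> xor_rep s) t)} = card {h \<in> ?F. P (answers n D h t)}"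
    if "\<And>b. P b \<Longrightarrow> \<not> xor_collision n D s b" for P t
    using that by (intro card_answers_relabel_pred)
      (auto simp: xor_rep_less xor_collision_def intro!: inj_on_xor_rep)
  have "{h \<in> ?F. snd D (answers n D (h \<circ> xor_rep s) q)} \<subseteq>
      {h \<in> ?F. acc (answers n D (h \<circ> xor_rep s) q)} \<union>
      (\<Union>t<q. {h \<in> ?F. new (answers n D (h \<circ> xor_rep s) t)})"
    by (auto simp: acc_def new_def dest!: first_xor_collision[OF assms])
  then have "card {h \<in> ?F. snd D (answers n D (h \<circ> xor_rep s) q)} \<le>
      card ({h \<in> ?F. acc (answers n D (h \<circ> xor_rep s) q)} \<union>
      (\<Union>t<q. {h \<in> ?F. new (answers n D (h \<circ> xor_rep s) t)}))"
    by (rule card_mono[rotated]) simp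
  also have "\<dots> \<le> card {h \<in> ?F. acc (answers n D (h \<circ> xor_rep s) q)} +
      (\<Sum>t<q. card {h \<in> ?F. new (answers n D (h \<circ> xor_rep s) t)})"
    by (rule order.trans[OF card_Un_le add_left_mono]) (rule card_UN_le, simp)
  also have "\<dots> = card {h \<in> ?F. acc (answers n D h q)} + (\<Sum>t<q. card {h \<in> ?F. new (answers n D h t)})"
    using relabel[of acc q] relabel[of new] by (simp add: acc_def new_def)
  also have "\<dots> \<le> card {h \<in> ?F. snd D (answers n D h q)} +
      (\<Sum>t<q. card {h \<in> ?F. new_xor_collision n D s (answers n D h t)})"
    by (intro add_mono sum_mono card_mono) (auto simp: acc_def new_def)
  finally show ?thesis .
qed

lemma sum_card_accepting_comp_xor_rep_le:
  "(\<Sum>s\<in>{1..<2 ^ n}. card {h \<in> bool_funs (2 ^ n). snd D (answers n D (h \<circ> xor_rep s) q)})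
    \<le> (2 ^ n - 1) * card {h \<in> bool_funs (2 ^ n). snd D (answers n D h q)} + 2 ^ 2 ^ n * q\<^sup>2"
proof -
  let ?F = "bool_funs (2 ^ n)"
  let ?acc = "card {h \<in> ?F. snd D (answers n D h q)}"
  let ?new = "\<lambda>s t. card {h \<in> ?F. new_xor_collision n D s (answers n D h t)}"
  have "(\<Sum>s\<in>{1..<2 ^ n}. card {h \<in> ?F. snd D (answers n D (h \<circ> xor_rep s) q)})
      \<le> (\<Sum>s\<in>{1..<2 ^ n}. ?acc + (\<Sum>t<q. ?new s t))"
    by (intro sum_mono card_accepting_comp_xor_rep_le) auto
  also have "\<dots> = (2 ^ n - 1) * ?acc + (\<Sum>t<q. \<Sum>s\<in>{1..<2 ^ n}. ?new s t)"
    unfolding sum.distrib sum.swap[of _ "{1..<2 ^ n}"] by simp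
  also have "\<dots> \<le> (2 ^ n - 1) * ?acc + (\<Sum>t<q. 2 ^ 2 ^ n * q)"
  proof (intro add_left_mono sum_mono)
    fix t assume "t \<in> {..<q}"
    then have "(\<Sum>s\<in>{1..<2 ^ n}. ?new s t) \<le> 2 ^ 2 ^ n * t"
      using sum_card_new_xor_collision[of "{1..<2 ^ n}" ?F n D t] by (simp add: card_bool_funs)
    also have "\<dots> \<le> 2 ^ 2 ^ n * q"
      using \<open>t \<in> {..<q}\<close> by simp
    finally show "(\<Sum>s\<in>{1..<2 ^ n}. ?new s t) \<le> 2 ^ 2 ^ n * q" .
  qed
  also have "\<dots> = (2 ^ n - 1) * ?acc + 2 ^ 2 ^ n * q\<^sup>2"
    by (simp add: power2_eq_square)
  finally show ?thesis .
qed

section \<open>Averaging over a randomised algorithm\<close>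

lemma integrable_card_pmf:
  "finite S \<Longrightarrow> integrable (measure_pmf A) (\<lambda>D. real (card {x \<in> S. P x D}))"
  by (rule measure_pmf.integrable_const_bound[where B = "card S"]) (auto intro: card_mono)

lemma sum_prob_eq_expectation_card:
  assumes "finite S"
  shows "(\<Sum>x\<in>S. measure_pmf.prob A {D. P x D})
       = measure_pmf.expectation A (\<lambda>D. real (card {x \<in> S. P x D}))"
proof -
  have "(\<Sum>x\<in>S. measure_pmf.prob A {D. P x D}) = (\<Sum>x\<in>S. measure_pmf.expectation A (indicator {D. P x D}))"
    by simp
  also have "\<dots> = measure_pmf.expectation A (\<lambda>D. \<Sum>x\<in>S. indicator {D. P x D} D)"
    by (rule Bochner_Integration.integral_sum[symmetric]) (simp add: integrable_indicator_iff flip: less_top)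
  also have "(\<lambda>D. \<Sum>x\<in>S. indicator {D. P x D} D) = (\<lambda>D. real (card {x \<in> S. P x D}))"
    using assms by (simp add: indicator_def sum.If_cases Int_def conj_commute)
  finally show ?thesis .
qed

lemma sum_prob_accepts_comp_xor_rep_le:
  "(\<Sum>s\<in>{1..<2 ^ n}. \<Sum>h\<in>bool_funs (2 ^ n). measure_pmf.prob A {D. accepts n q D (h \<circ> xor_rep s)})
    \<le> real (2 ^ n - 1) * (\<Sum>h\<in>bool_funs (2 ^ n). measure_pmf.prob A {D. accepts n q D h})
      + 2 ^ 2 ^ n * (real q)\<^sup>2"
proof -
  let ?F = "bool_funs (2 ^ n)"
  let ?rep = "\<lambda>s D. real (card {h \<in> ?F. accepts n q D (h \<circ> xor_rep s)})"
  let ?acc = "\<lambda>D. real (card {h \<in> ?F. accepts n q D h})"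
  have int_rep: "integrable (measure_pmf A) (?rep s)" for s
    by (rule integrable_card_pmf) simp
  have int_acc: "integrable (measure_pmf A) ?acc"
    by (rule integrable_card_pmf) simp
  have "(\<Sum>s\<in>{1..<2 ^ n}. \<Sum>h\<in>?F. measure_pmf.prob A {D. accepts n q D (h \<circ> xor_rep s)})
      = (\<Sum>s\<in>{1..<2 ^ n}. measure_pmf.expectation A (?rep s))"
    by (intro sum.cong refl sum_prob_eq_expectation_card finite_bool_funs)
  also have "\<dots> = measure_pmf.expectation A (\<lambda>D. \<Sum>s\<in>{1..<2 ^ n}. ?rep s D)"
    by (rule Bochner_Integration.integral_sum[symmetric]) (rule int_rep)
  also have "\<dots> \<le> measure_pmf.expectation A (\<lambda>D. real (2 ^ n - 1) * ?acc D + 2 ^ 2 ^ n * (real q)\<^sup>2)"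
  proof (rule integral_mono)
    fix D
    show "(\<Sum>s\<in>{1..<2 ^ n}. ?rep s D) \<le> real (2 ^ n - 1) * ?acc D + 2 ^ 2 ^ n * (real q)\<^sup>2"
      using of_nat_mono[OF sum_card_accepting_comp_xor_rep_le[of n D q], where 'a = real]
      by (simp only: accepts_def of_nat_sum of_nat_add of_nat_mult of_nat_power of_nat_numeral)
    show "integrable (measure_pmf A) (\<lambda>D. \<Sum>s\<in>{1..<2 ^ n}. ?rep s D)"
      by (rule Bochner_Integration.integrable_sum) (rule int_rep)
    show "integrable (measure_pmf A) (\<lambda>D. real (2 ^ n - 1) * ?acc D + 2 ^ 2 ^ n * (real q)\<^sup>2)"
      using int_acc by (intro Bochner_Integration.integrable_add integrable_mult_right measure_pmf.integrable_const)
  qed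
  also have "\<dots> = real (2 ^ n - 1) * measure_pmf.expectation A ?acc + 2 ^ 2 ^ n * (real q)\<^sup>2"
    using int_acc by simp
  also have "\<dots> = real (2 ^ n - 1) * (\<Sum>h\<in>?F. measure_pmf.prob A {D. accepts n q D h})
      + 2 ^ 2 ^ n * (real q)\<^sup>2"
    by (simp only: sum_prob_eq_expectation_card finite_bool_funs)
  finally show ?thesis .
qed

section \<open>Most functions are far from L\<close>

definition xor_lower :: "nat \<Rightarrow> nat \<Rightarrow> nat set" where
  "xor_lower n s = {x. x < 2 ^ n \<and> xor x s < x}"

lemma card_xor_lower:
  assumes "0 < s" "s < 2 ^ n"
  shows "2 * card (xor_lower n s) = 2 ^ n"
proof -
  let ?U = "{x. x < 2 ^ n \<and> x < xor x s}"
  have "bij_betw (\<lambda>x. xor x s) (xor_lower n s) ?U"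
    by (rule bij_betwI[where g = "\<lambda>x. xor x s"]) (auto simp: xor_lower_def xor_less_two_power assms)
  then have "card (xor_lower n s) = card ?U"
    by (rule bij_betw_same_card)
  moreover have "xor_lower n s \<union> ?U = {..<2 ^ n}"
    using xor_ne_self[of s] assms by (auto simp: xor_lower_def) (metis nat_neq_iff)
  moreover have "card (xor_lower n s \<union> ?U) = card (xor_lower n s) + card ?U"
    by (rule card_Un_disjoint) (auto simp: xor_lower_def)
  ultimately show ?thesis
    by simp
qed

lemma card_xor_disagreements:
  assumes "s < 2 ^ n"
  shows "card {x. x < 2 ^ n \<and> h x \<noteq> h (xor x s)} = 2 * card {x \<in> xor_lower n s. h x \<noteq> h (xor x s)}"
proof -
  let ?L = "{x \<in> xor_lower n s. h x \<noteq> h (xor x s)}"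
  have "{x. x < 2 ^ n \<and> h x \<noteq> h (xor x s)} \<subseteq> ?L \<union> (\<lambda>x. xor x s) ` ?L"
  proof
    fix x assume x: "x \<in> {x. x < 2 ^ n \<and> h x \<noteq> h (xor x s)}"
    show "x \<in> ?L \<union> (\<lambda>x. xor x s) ` ?L"
    proof (cases "xor x s < x")
      case True
      then show ?thesis
        using x by (simp add: xor_lower_def)
    next
      case False
      moreover have "xor x s \<noteq> x"
        using x by auto
      ultimately have "xor x s \<in> ?L"
        using x assms by (auto simp: xor_lower_def xor_less_two_power)
      then have "xor (xor x s) s \<in> (\<lambda>x. xor x s) ` ?L"
        by (rule imageI)
      then show ?thesis
        by simp
    qed
  qed
  moreover have "?L \<union> (\<lambda>x. xor x s) ` ?L \<subseteq> {x. x < 2 ^ n \<and> h x \<noteq> h (xor x s)}"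
  proof -
    have "xor x s < 2 ^ n \<and> h (xor x s) \<noteq> h (xor (xor x s) s)" if "x \<in> ?L" for x
      using that assms by (simp add: xor_lower_def xor_less_two_power) metis
    then show ?thesis
      by (auto simp: xor_lower_def)
  qed
  ultimately have "card {x. x < 2 ^ n \<and> h x \<noteq> h (xor x s)} = card (?L \<union> (\<lambda>x. xor x s) ` ?L)"
    by (intro arg_cong[where f = card] subset_antisym)
  also have "\<dots> = card ?L + card ((\<lambda>x. xor x s) ` ?L)"
  proof (rule card_Un_disjoint)
    show "finite ?L"
      by (rule finite_subset[of _ "{..<2 ^ n}"]) (auto simp: xor_lower_def)
    then show "finite ((\<lambda>x. xor x s) ` ?L)"
      by (rule finite_imageI)
    show "?L \<inter> (\<lambda>x. xor x s) ` ?L = {}"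
      by (auto simp: xor_lower_def)
  qed
  also have "card ((\<lambda>x. xor x s) ` ?L) = card ?L"
    by (rule card_image, rule inj_onI, metis xor_xor_cancel_right)
  finally show ?thesis
    by simp
qed

lemma card_subsets_card_le:
  assumes "finite B"
  shows "card {A. A \<subseteq> B \<and> card A \<le> k} = (\<Sum>j\<le>k. card B choose j)"
proof -
  have "{A. A \<subseteq> B \<and> card A \<le> k} = (\<Union>j\<le>k. {A. A \<subseteq> B \<and> card A = j})"
    by auto
  also have "card \<dots> = (\<Sum>j\<le>k. card {A. A \<subseteq> B \<and> card A = j})"
    by (rule card_UN_disjoint) (auto intro: finite_subset[OF _ finite_Pow_iff[THEN iffD2, OF assms]])
  also have "\<dots> = (\<Sum>j\<le>k. card B choose j)"
    using assms by (simp add: n_subsets)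
  finally show ?thesis .
qed

lemma card_bool_funs_few_true:
  assumes "B \<subseteq> {..<N}"
  shows "card {h \<in> bool_funs N. card {x \<in> B. h x} \<le> k} \<le> (\<Sum>j\<le>k. card B choose j) * 2 ^ (N - card B)"
proof -
  have B: "finite B"
    using assms finite_subset by blast
  let ?\<A> = "{A. A \<subseteq> B \<and> card A \<le> k}"
  let ?U = "\<Union>A\<in>?\<A>. {h \<in> bool_funs N. \<forall>x\<in>B. h x = (x \<in> A)}"
  have "{h \<in> bool_funs N. card {x \<in> B. h x} \<le> k} \<subseteq> ?U"
  proof
    fix h assume h: "h \<in> {h \<in> bool_funs N. card {x \<in> B. h x} \<le> k}"
    then have "{x \<in> B. h x} \<in> ?\<A>"
      by simp
    moreover have "h \<in> {h' \<in> bool_funs N. \<forall>x\<in>B. h' x = (x \<in> {x \<in> B. h x})}"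
      using h by simp
    ultimately show "h \<in> ?U"
      by (rule UN_I)
  qed
  moreover have "finite ?U"
    by (rule finite_subset[OF _ finite_bool_funs]) blast
  ultimately have "card {h \<in> bool_funs N. card {x \<in> B. h x} \<le> k} \<le> card ?U"
    by (rule card_mono[rotated])
  also have "\<dots> \<le> (\<Sum>A\<in>?\<A>. card {h \<in> bool_funs N. \<forall>x\<in>B. h x = (x \<in> A)})"
    using B by (intro card_UN_le) auto
  also have "\<dots> = card ?\<A> * 2 ^ (N - card B)"
    using assms by (simp add: card_bool_funs_fixing)
  also have "\<dots> = (\<Sum>j\<le>k. card B choose j) * 2 ^ (N - card B)"
    using B by (simp add: card_subsets_card_le)
  finally show ?thesis .
qed

lemma card_bool_funs_few_xor_disagreements:
  assumes "0 < s" "s < 2 ^ n"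
  shows "card {h \<in> bool_funs (2 ^ n). card {x. x < 2 ^ n \<and> h x \<noteq> h (xor x s)} \<le> 2 * k}
    \<le> (\<Sum>j\<le>k. card (xor_lower n s) choose j) * 2 ^ (2 ^ n - card (xor_lower n s))"
proof -
  let ?F = "bool_funs (2 ^ n)"
  let ?L = "xor_lower n s"
  \<comment> \<open>On the lower point of each pair, \<open>\<Phi> h\<close> records whether h disagrees across the pair.\<close>
  define \<Phi> where "\<Phi> h x \<longleftrightarrow> (if x \<in> ?L then h x \<noteq> h (xor x s) else h x)" for h x
  have upper: "xor x s \<notin> ?L" if "x \<in> ?L" for x
    using that by (auto simp: xor_lower_def)
  have "inj_on \<Phi> ?F"
  proof (rule inj_onI, rule ext)
    fix h h' x assume eq: "\<Phi> h = \<Phi> h'"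
    then have "h y = h' y" if "y \<notin> ?L" for y
      using that by (metis \<Phi>_def)
    moreover have "(h x \<noteq> h (xor x s)) = (h' x \<noteq> h' (xor x s))" if "x \<in> ?L"
      using eq that by (metis \<Phi>_def)
    ultimately show "h x = h' x"
      using upper by (cases "x \<in> ?L") auto
  qed
  moreover have "\<Phi> h \<in> {h \<in> ?F. card {x \<in> ?L. h x} \<le> k}"
    if "h \<in> ?F" "card {x. x < 2 ^ n \<and> h x \<noteq> h (xor x s)} \<le> 2 * k" for h
  proof -
    have "{x \<in> ?L. \<Phi> h x} = {x \<in> ?L. h x \<noteq> h (xor x s)}"
      by (auto simp: \<Phi>_def)
    then have "card {x \<in> ?L. \<Phi> h x} \<le> k"
      using that(2) card_xor_disagreements[OF assms(2), of h] by simp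
    moreover have "\<Phi> h \<in> ?F"
      using that(1) by (auto simp: bool_funs_def \<Phi>_def xor_lower_def)
    ultimately show ?thesis
      by blast
  qed
  ultimately have "card {h \<in> ?F. card {x. x < 2 ^ n \<and> h x \<noteq> h (xor x s)} \<le> 2 * k}
      \<le> card {h \<in> ?F. card {x \<in> ?L. h x} \<le> k}"
    by (intro card_inj_on_le[where f = \<Phi>]) (auto intro: inj_on_subset)
  also have "\<dots> \<le> (\<Sum>j\<le>k. card ?L choose j) * 2 ^ (2 ^ n - card ?L)"
    by (rule card_bool_funs_few_true) (auto simp: xor_lower_def)
  finally show ?thesis .
qed

lemma power_mult_sum_binomial_le:
  fixes r :: nat
  assumes "k \<le> m" "0 < r"
  shows "r ^ m * (\<Sum>j\<le>k. m choose j) \<le> r ^ k * (r + 1) ^ m"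
proof -
  have "r ^ m * (\<Sum>j\<le>k. m choose j) = (\<Sum>j\<le>k. r ^ m * (m choose j))"
    by (simp add: sum_distrib_left)
  also have "\<dots> \<le> (\<Sum>j\<le>k. r ^ k * ((m choose j) * r ^ (m - j)))"
  proof (rule sum_mono)
    fix j assume "j \<in> {..k}"
    then have "r ^ m \<le> r ^ (k + (m - j))"
      using assms by (intro power_increasing) auto
    then show "r ^ m * (m choose j) \<le> r ^ k * ((m choose j) * r ^ (m - j))"
      by (simp add: power_add algebra_simps)
  qed
  also have "\<dots> \<le> r ^ k * (\<Sum>j\<le>m. (m choose j) * r ^ (m - j))"
    using assms by (simp add: sum_distrib_left sum_mono2)
  also have "(\<Sum>j\<le>m. (m choose j) * r ^ (m - j)) = (r + 1) ^ m"
    using binomial_ring[of 1 r m] by (simp add: add.commute)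
  finally show ?thesis .
qed

lemma linear_mult_16_power_le_27_power: "16 \<le> k \<Longrightarrow> 48 * k * 16 ^ k \<le> (27::nat) ^ k"
proof (induction k rule: dec_induct)
  case (step k)
  have "48 * Suc k * 16 ^ Suc k \<le> 27 * (48 * k * 16 ^ k)"
    using step.hyps by simp
  also have "\<dots> \<le> 27 * 27 ^ k"
    using step.IH by simp
  finally show ?case
    by simp
qed simp

lemma binomial_tail_estimate:
  assumes "16 \<le> k"
  shows "6 * (8 * k) * ((\<Sum>j\<le>k. 4 * k choose j) * 2 ^ (4 * k)) \<le> (2::nat) ^ (8 * k)"
proof -
  have "3 ^ (4 * k) * (6 * (8 * k) * ((\<Sum>j\<le>k. 4 * k choose j) * 2 ^ (4 * k)))
      = 48 * k * (3 ^ (4 * k) * (\<Sum>j\<le>k. 4 * k choose j)) * 2 ^ (4 * k)"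
    by (simp add: algebra_simps)
  also have "\<dots> \<le> 48 * k * (3 ^ k * 4 ^ (4 * k)) * 2 ^ (4 * k)"
    using power_mult_sum_binomial_le[of k "4 * k" 3] by simp
  also have "\<dots> = (48 * k * 16 ^ k) * (3 ^ k * 256 ^ k)"
  proof -
    have "(4::nat) ^ (4 * k) = 256 ^ k" "(2::nat) ^ (4 * k) = 16 ^ k"
      by (simp_all add: power_mult)
    then show ?thesis
      by (simp add: algebra_simps)
  qed
  also have "\<dots> \<le> 27 ^ k * (3 ^ k * 256 ^ k)"
    using linear_mult_16_power_le_27_power[OF assms] by simp
  also have "\<dots> = 3 ^ (4 * k) * 2 ^ (8 * k)"
    by (simp add: power_mult flip: power_mult_distrib)
  finally show ?thesis
    by simp
qed

lemma card_xor_disagreements_le_dist: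
  assumes "s < 2 ^ n" "\<forall>x<2 ^ n. g x = g (xor x s)"
  shows "card {x. x < 2 ^ n \<and> h x \<noteq> h (xor x s)} \<le> 2 * dist_fun n h g"
proof -
  let ?\<Delta> = "{x. x < 2 ^ n \<and> h x \<noteq> g x}"
  have "{x. x < 2 ^ n \<and> h x \<noteq> h (xor x s)} \<subseteq> ?\<Delta> \<union> (\<lambda>x. xor x s) ` ?\<Delta>"
  proof
    fix x assume x: "x \<in> {x. x < 2 ^ n \<and> h x \<noteq> h (xor x s)}"
    show "x \<in> ?\<Delta> \<union> (\<lambda>x. xor x s) ` ?\<Delta>"
    proof (cases "h x = g x")
      case True
      then have "xor x s \<in> ?\<Delta>"
        using x assms by (simp add: xor_less_two_power)
      then have "xor (xor x s) s \<in> (\<lambda>x. xor x s) ` ?\<Delta>"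
        by (rule imageI)
      then show ?thesis
        by simp
    qed (use x in simp)
  qed
  then have "card {x. x < 2 ^ n \<and> h x \<noteq> h (xor x s)} \<le> card (?\<Delta> \<union> (\<lambda>x. xor x s) ` ?\<Delta>)"
    by (rule card_mono[rotated]) simp
  also have "\<dots> \<le> card ?\<Delta> + card ((\<lambda>x. xor x s) ` ?\<Delta>)"
    by (rule card_Un_le)
  also have "\<dots> \<le> 2 * card ?\<Delta>"
    using card_image_le[of ?\<Delta> "\<lambda>x. xor x s"] by simp
  finally show ?thesis
    by (simp add: dist_fun_def)
qed

lemma not_far_from_L_imp_xor_disagreements_le:
  assumes "\<not> far_from_L n eps h"
  shows "\<exists>s\<in>{1..<2 ^ n}. real (card {x. x < 2 ^ n \<and> h x \<noteq> h (xor x s)}) \<le> 2 * eps * 2 ^ n"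
proof -
  obtain g where g: "in_L n g" "real (dist_fun n h g) \<le> eps * 2 ^ n"
    using assms unfolding far_from_L_def by auto
  then obtain s where s: "0 < s" "s < 2 ^ n" "\<forall>x<2 ^ n. g x = g (xor x s)"
    unfolding in_L_def by auto
  have "real (card {x. x < 2 ^ n \<and> h x \<noteq> h (xor x s)}) \<le> 2 * real (dist_fun n h g)"
    using card_xor_disagreements_le_dist[OF s(2,3), of h] by linarith
  then show ?thesis
    using g(2) s by (intro bexI[of _ s]) auto
qed

lemma card_not_far_from_L_le:
  assumes "7 \<le> n"
  shows "6 * card {h \<in> bool_funs (2 ^ n). \<not> far_from_L n (1/8) h} \<le> 2 ^ 2 ^ n"
proof -
  define k where "k = (2::nat) ^ (n - 3)"
  have "(2::nat) ^ n = 2 ^ (n - 3) * 2 ^ 3"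
    unfolding power_add[symmetric] using assms by simp
  then have N: "(2::nat) ^ n = 8 * k"
    by (simp add: k_def)
  \<comment> \<open>\<open>n \<ge> 7\<close> is exactly what makes \<open>binomial_tail_estimate\<close> applicable.\<close>
  have "(2::nat) ^ 4 \<le> k"
    unfolding k_def using assms by (intro power_increasing) auto
  then have k: "16 \<le> k"
    by simp
  let ?F = "bool_funs (2 ^ n)"
  let ?few = "\<lambda>s. {h \<in> ?F. card {x. x < 2 ^ n \<and> h x \<noteq> h (xor x s)} \<le> 2 * k}"
  have "{h \<in> ?F. \<not> far_from_L n (1/8) h} \<subseteq> (\<Union>s\<in>{1..<2 ^ n}. ?few s)"
  proof
    fix h assume h: "h \<in> {h \<in> ?F. \<not> far_from_L n (1/8) h}"
    then obtain s where s: "s \<in> {1..<2 ^ n}"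
      and "real (card {x. x < 2 ^ n \<and> h x \<noteq> h (xor x s)}) \<le> 2 * (1/8) * 2 ^ n"
      using not_far_from_L_imp_xor_disagreements_le[of n "1/8" h] by blast
    moreover have "(2::real) ^ n = real (8 * k)"
      using N by (metis of_nat_numeral of_nat_power)
    ultimately have "card {x. x < 2 ^ n \<and> h x \<noteq> h (xor x s)} \<le> 2 * k"
      by simp
    then show "h \<in> (\<Union>s\<in>{1..<2 ^ n}. ?few s)"
      using h s by blast
  qed
  then have "card {h \<in> ?F. \<not> far_from_L n (1/8) h} \<le> card (\<Union>s\<in>{1..<2 ^ n}. ?few s)"
    by (rule card_mono[rotated]) (rule finite_subset[OF _ finite_bool_funs], blast)
  also have "\<dots> \<le> (\<Sum>s\<in>{1..<2 ^ n}. card (?few s))"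
    by (rule card_UN_le) simp
  also have "\<dots> \<le> (\<Sum>s\<in>{1..<(2::nat) ^ n}. (\<Sum>j\<le>k. 4 * k choose j) * 2 ^ (4 * k))"
  proof (rule sum_mono)
    fix s assume s: "s \<in> {1..<(2::nat) ^ n}"
    then have "card (xor_lower n s) = 4 * k"
      using card_xor_lower[of s n] N by simp
    then show "card (?few s) \<le> (\<Sum>j\<le>k. 4 * k choose j) * 2 ^ (4 * k)"
      using card_bool_funs_few_xor_disagreements[of s n k] s N by simp
  qed
  also have "\<dots> \<le> 8 * k * ((\<Sum>j\<le>k. 4 * k choose j) * 2 ^ (4 * k))"
    using N by simp
  finally have "6 * card {h \<in> ?F. \<not> far_from_L n (1/8) h}
      \<le> 6 * (8 * k) * ((\<Sum>j\<le>k. 4 * k choose j) * 2 ^ (4 * k))"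
    by simp
  also have "\<dots> \<le> 2 ^ 2 ^ n"
    using binomial_tail_estimate[OF k] N by simp
  finally show ?thesis .
qed

lemma tester_sum_prob_accepts_comp_xor_rep_ge:
  assumes "is_tester n eps q A"
  shows "real (2 ^ n - 1) * 2 ^ 2 ^ n * (2/3)
    \<le> (\<Sum>s\<in>{1..<2 ^ n}. \<Sum>h\<in>bool_funs (2 ^ n).
          measure_pmf.prob A {D. accepts n q D (h \<circ> xor_rep s)})"
proof -
  have "(\<Sum>s\<in>{1..<(2::nat) ^ n}. \<Sum>h\<in>bool_funs (2 ^ n). (2/3::real))
      \<le> (\<Sum>s\<in>{1..<2 ^ n}. \<Sum>h\<in>bool_funs (2 ^ n).
            measure_pmf.prob A {D. accepts n q D (h \<circ> xor_rep s)})"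
    using assms comp_xor_rep_in_L unfolding is_tester_def by (intro sum_mono) auto
  then show ?thesis
    by (simp add: card_bool_funs)
qed

lemma tester_sum_prob_accepts_le:
  assumes "is_tester n eps q A"
  shows "(\<Sum>h\<in>bool_funs (2 ^ n). measure_pmf.prob A {D. accepts n q D h})
    \<le> 2 ^ 2 ^ n / 3 + real (card {h \<in> bool_funs (2 ^ n). \<not> far_from_L n eps h})"
proof -
  let ?F = "bool_funs (2 ^ n)"
  have "(\<Sum>h\<in>?F. measure_pmf.prob A {D. accepts n q D h})
      \<le> (\<Sum>h\<in>?F. 1/3 + (if far_from_L n eps h then 0 else 1))"
  proof (rule sum_mono)
    fix h
    show "measure_pmf.prob A {D. accepts n q D h} \<le> 1/3 + (if far_from_L n eps h then 0 else 1)"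
    proof (cases "far_from_L n eps h")
      case False
      then show ?thesis
        using measure_pmf.prob_le_1[of A "{D. accepts n q D h}"] by (simp only: if_False)
    qed (use assms in \<open>simp add: is_tester_def\<close>)
  qed
  also have "\<dots> = 2 ^ 2 ^ n / 3 + real (card {h \<in> ?F. \<not> far_from_L n eps h})"
    by (simp add: sum.distrib card_bool_funs sum.If_cases Int_def conj_commute)
  finally show ?thesis .
qed

lemma tester_query_bound:
  assumes "is_tester n eps q A"
  shows "real (2 ^ n - 1) *
      (2 ^ 2 ^ n - 3 * real (card {h \<in> bool_funs (2 ^ n). \<not> far_from_L n eps h}))
    \<le> 3 * 2 ^ 2 ^ n * (real q)\<^sup>2"
proof -
  let ?M = "real (2 ^ n - 1)"
  let ?P = "(2::real) ^ 2 ^ n"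
  let ?S = "\<Sum>h\<in>bool_funs (2 ^ n). measure_pmf.prob A {D. accepts n q D h}"
  let ?c = "real (card {h \<in> bool_funs (2 ^ n). \<not> far_from_L n eps h})"
  have "?M * ?S \<le> ?M * (?P / 3 + ?c)"
    using tester_sum_prob_accepts_le[OF assms] by (rule mult_left_mono) simp
  moreover have "?M * (?P / 3 + ?c) = ?M * ?P / 3 + ?M * ?c"
    and "?M * (?P - 3 * ?c) = ?M * ?P - 3 * (?M * ?c)"
    by (simp_all add: algebra_simps)
  ultimately show ?thesis
    using tester_sum_prob_accepts_comp_xor_rep_ge[OF assms]
      sum_prob_accepts_comp_xor_rep_le[where A = A and n = n and q = q]
    by linarith
qed

theorem theorem4p2:
  shows "\<exists>c::real. c > 0 \<and> (\<exists>n0. \<forall>n \<ge> n0. \<forall>q A.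
           is_tester n (1/8) q A \<longrightarrow> real q \<ge> c * sqrt (2 ^ n))"
proof (intro exI[of _ "1/4"] conjI exI[of _ 7] allI impI)
  show "(0::real) < 1/4"
    by simp
  fix n q A assume n: "7 \<le> n" and tester: "is_tester n (1/8) q A"
  let ?near = "real (card {h \<in> bool_funs (2 ^ n). \<not> far_from_L n (1/8) h})"
  have "6 * ?near \<le> 2 ^ 2 ^ n"
    using of_nat_mono[OF card_not_far_from_L_le[OF n], where 'a = real] by simp
  then have "real (2 ^ n - 1) * (2 ^ 2 ^ n / 2) \<le> real (2 ^ n - 1) * (2 ^ 2 ^ n - 3 * ?near)"
    by (intro mult_left_mono) auto
  also have "\<dots> \<le> 3 * 2 ^ 2 ^ n * (real q)\<^sup>2"
    by (rule tester_query_bound[OF tester])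
  finally have "2 ^ 2 ^ n * real (2 ^ n - 1) \<le> 2 ^ 2 ^ n * (6 * (real q)\<^sup>2)"
    by (simp add: algebra_simps)
  then have "real (2 ^ n - 1) \<le> 6 * (real q)\<^sup>2"
    by (rule mult_left_le_imp_le) simp
  moreover have "(2::real) ^ n \<ge> 2"
    using power_increasing[of 1 n "2::real"] n by simp
  ultimately have "sqrt (2 ^ n / 16) \<le> sqrt ((real q)\<^sup>2)"
    by (intro real_sqrt_le_mono) (simp add: of_nat_diff)
  then show "1/4 * sqrt (2 ^ n) \<le> real q"
    by (simp add: real_sqrt_divide)
qed

end
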